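(* Let $A\subseteq\mathbb{R}$ be a nonempty homogeneous suborder and let $X\subseteq\mathbb{R}$ be finite. Then $A\cup X$ is order-isomorphic to $A$.
   Context: A suborder $A\subseteq\mathbb{R}$ is homogeneous if $A\cong A\cap I$ (order-isomorphism) for every open interval $I=(a,b)$ with $-\infty\le a<b\le\infty$. *)

theory Defs
  imports Complex_Main "HOL-Library.Extended_Real"
begin

definition order_iso :: "real set \<Rightarrow> real set \<Rightarrow> bool" where
  "order_iso A B \<longleftrightarrow>
     (\<exists>f. bij_betw f A B \<and> (\<forall>x\<in>A. \<forall>y\<in>A. x < y \<longrightarrow> f x < f y))"

definition open_interval :: "ereal \<Rightarrow> ereal \<Rightarrow> real set" where
  "open_interval a b = {x. a < ereal x \<and> ereal x < b}"

definition homogeneous :: "real set \<Rightarrow> bool" where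
  "homogeneous A \<longleftrightarrow>
     (\<forall>a b. a < b \<longrightarrow> order_iso A (A \<inter> open_interval a b))"

end

theory Submission
  imports Defs
begin

text \<open>By induction on \<open>X\<close> one shows the stronger claim that \<open>(A \<union> X) \<inter> (a,b)\<close> is isomorphic
  to \<open>A\<close> for every open interval \<open>(a,b)\<close>; the case \<open>(a,b) = \<real>\<close> is the theorem. A new point
  \<open>x \<in> (a,b) - A\<close> cuts \<open>(a,b)\<close> into \<open>(a,x)\<close> and \<open>(x,b)\<close>, whose sections are isomorphic to \<open>A\<close>
  by induction. On the other side, any \<open>c \<in> A\<close> cuts \<open>A\<close> into \<open>A \<inter> (-\<infinity>,c)\<close> and \<open>A \<inter> (c,\<infinity>)\<close>,
  both isomorphic to \<open>A\<close> by homogeneity. Gluing the two pairs of isomorphisms and sending \<open>x\<close>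
  to \<open>c\<close> gives the isomorphism for \<open>(a,b)\<close>; this is where \<open>A \<noteq> {}\<close> is needed.\<close>

lemma order_iso_iff_strict_mono_on:
  "order_iso A B \<longleftrightarrow> (\<exists>f. bij_betw f A B \<and> strict_mono_on A f)"
  unfolding order_iso_def strict_mono_on_def by blast

lemma order_iso_sym:
  assumes "order_iso A B"
  shows "order_iso B A"
proof -
  obtain f where f: "bij_betw f A B" "strict_mono_on A f"
    using assms order_iso_iff_strict_mono_on by blast
  have "strict_mono_on B (inv_into A f)"
  proof (rule strict_mono_onI)
    fix x y assume "x \<in> B" "y \<in> B" "x < y"
    then show "inv_into A f x < inv_into A f y"
      using f strict_mono_on_less[OF f(2)]
      by (metis bij_betw_def bij_betw_inv_into_right inv_into_into)
  qed
  then show ?thesis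
    using bij_betw_inv_into[OF f(1)] order_iso_iff_strict_mono_on by blast
qed

lemma order_iso_trans:
  assumes "order_iso A B" and "order_iso B C"
  shows "order_iso A C"
proof -
  obtain f where f: "bij_betw f A B" "strict_mono_on A f"
    using assms(1) order_iso_iff_strict_mono_on by blast
  obtain g where g: "bij_betw g B C" "strict_mono_on B g"
    using assms(2) order_iso_iff_strict_mono_on by blast
  have "strict_mono_on A (g \<circ> f)"
    using f g by (auto intro!: strict_mono_onI dest: strict_mono_onD simp: bij_betw_def)
  then show ?thesis
    using bij_betw_trans[OF f(1) g(1)] order_iso_iff_strict_mono_on by blast
qed

lemma order_iso_glue:
  assumes "order_iso B1 C1" and "order_iso B2 C2"
    and "\<forall>x\<in>B1. x < p" and "\<forall>x\<in>B2. p < x"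
    and "\<forall>y\<in>C1. y < q" and "\<forall>y\<in>C2. q < y"
  shows "order_iso (B1 \<union> {p} \<union> B2) (C1 \<union> {q} \<union> C2)"
proof -
  obtain f where f: "bij_betw f B1 C1" "strict_mono_on B1 f"
    using assms(1) order_iso_iff_strict_mono_on by blast
  obtain g where g: "bij_betw g B2 C2" "strict_mono_on B2 g"
    using assms(2) order_iso_iff_strict_mono_on by blast
  define h where "h x = (if x < p then f x else if x = p then q else g x)" for x
  have f_below: "f x < q" if "x \<in> B1" for x
    using that f(1) assms(5) by (auto simp: bij_betw_def)
  have g_above: "q < g x" if "x \<in> B2" for x
    using that g(1) assms(6) by (auto simp: bij_betw_def)
  have mono: "strict_mono_on (B1 \<union> {p} \<union> B2) h"
  proof (rule strict_mono_onI)
    fix x y assume "x \<in> B1 \<union> {p} \<union> B2" "y \<in> B1 \<union> {p} \<union> B2" "x < y"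
    then show "h x < h y"
      using strict_mono_onD[OF f(2)] strict_mono_onD[OF g(2)] f_below g_above assms(3,4)
      unfolding h_def by (smt (verit) UnE singletonD)
  qed
  have "h ` B1 = f ` B1" and "h ` B2 = g ` B2" and "h p = q"
    using assms(3,4) by (force simp: h_def intro!: image_cong)+
  then have "h ` (B1 \<union> {p} \<union> B2) = C1 \<union> {q} \<union> C2"
    using f(1) g(1) unfolding image_Un bij_betw_def by simp
  then have "bij_betw h (B1 \<union> {p} \<union> B2) (C1 \<union> {q} \<union> C2)"
    using strict_mono_on_imp_inj_on[OF mono] by (simp add: bij_betw_def)
  with mono show ?thesis
    using order_iso_iff_strict_mono_on by blast
qed

lemma open_interval_UNIV: "open_interval (-\<infinity>) \<infinity> = UNIV"
  by (auto simp: open_interval_def)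

lemma open_interval_split:
  assumes "x \<in> open_interval a b"
  shows "open_interval a b = open_interval a (ereal x) \<union> {x} \<union> open_interval (ereal x) b"
proof -
  have "a < ereal y" if "x < y" for y
    using assms that by (auto simp: open_interval_def intro: less_trans[of a "ereal x"])
  moreover have "ereal y < b" if "y < x" for y
    using assms that by (auto simp: open_interval_def intro: less_trans[of _ "ereal x" b])
  ultimately show ?thesis
    using assms by (auto simp: open_interval_def)
qed

lemma homogeneous_order_iso_open_interval:
  assumes "homogeneous A" and "a < b"
  shows "order_iso (A \<inter> open_interval a b) A"
  using assms order_iso_sym unfolding homogeneous_def by blast

lemma homogeneous_Un_finite_inter_open_interval:
  assumes "A \<noteq> {}" and "homogeneous A" and "finite X"
  shows "a < b \<Longrightarrow> order_iso ((A \<union> X) \<inter> open_interval a b) A"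
  using assms(3)
proof (induction X arbitrary: a b rule: finite_induct)
  case empty
  then show ?case
    using homogeneous_order_iso_open_interval[OF assms(2)] by simp
next
  case (insert x X)
  show ?case
  proof (cases "x \<in> open_interval a b - A")
    case False
    then have "(A \<union> insert x X) \<inter> open_interval a b = (A \<union> X) \<inter> open_interval a b"
      by auto
    then show ?thesis
      using insert.IH insert.prems by simp
  next
    case True
    then have ax: "a < ereal x" and xb: "ereal x < b"
      by (auto simp: open_interval_def)
    obtain c where c: "c \<in> A"
      using assms(1) by blast
    have split_section: "(A \<union> insert x X) \<inter> open_interval a b =
      (A \<union> X) \<inter> open_interval a (ereal x) \<union> {x} \<union> (A \<union> X) \<inter> open_interval (ereal x) b"
      using open_interval_split[of x a b] True by blast
    have split_A: "A \<inter> open_interval (-\<infinity>) (ereal c) \<union> {c} \<union> A \<inter> open_interval (ereal c) \<infinity> = A"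
      using open_interval_split[of c "-\<infinity>" \<infinity>] c by (auto simp: open_interval_UNIV)
    have
      "order_iso ((A \<union> X) \<inter> open_interval a (ereal x)) (A \<inter> open_interval (-\<infinity>) (ereal c))"
      "order_iso ((A \<union> X) \<inter> open_interval (ereal x) b) (A \<inter> open_interval (ereal c) \<infinity>)"
      using insert.IH[OF ax] insert.IH[OF xb]
        homogeneous_order_iso_open_interval[OF assms(2), of "-\<infinity>" "ereal c"]
        homogeneous_order_iso_open_interval[OF assms(2), of "ereal c" \<infinity>]
      by (auto intro: order_iso_trans order_iso_sym)
    then have "order_iso ((A \<union> insert x X) \<inter> open_interval a b)
      (A \<inter> open_interval (-\<infinity>) (ereal c) \<union> {c} \<union> A \<inter> open_interval (ereal c) \<infinity>)"
      unfolding split_section by (rule order_iso_glue) (auto simp: open_interval_def)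
    then show ?thesis
      unfolding split_A .
  qed
qed

theorem mainTheorem11:
  fixes A X :: "real set"
  assumes "A \<noteq> {}" and "homogeneous A" and "finite X"
  shows "order_iso (A \<union> X) A"
  using homogeneous_Un_finite_inter_open_interval[OF assms, of "-\<infinity>" \<infinity>]
  by (simp add: open_interval_UNIV)

end
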